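(* Let $F$ be a field with $\mathrm{char}\,F\neq 2$, let $\lambda\in F$, and let $I_n$ be the $F$-algebra defined in the context. Then $\mathrm{rb}_\lambda(I_n)\le 2$. If $F$ is totally real, then $\mathrm{rb}_\lambda(I_n)=1$. If $F$ is quadratically closed and $n\ge 3$, then $\mathrm{rb}_\lambda(I_n)=2$.
   Context: $I_n$ denotes the $n$-dimensional (non-associative) algebra over $F$ with basis $e_1,\ldots,e_n$ and multiplication given by $e_n\cdot e_n=2e_n$, $e_n\cdot e_j=e_j$, $e_j\cdot e_j=e_n$ for $j=1,\ldots,n-1$, with all other products of basis elements equal to zero (extended bilinearly). A linear operator $R\colon A\to A$ is a Rota--Baxter operator of weight $\lambda\in F$ if $R(x)R(y)=R(R(x)y+xR(y)+\lambda xy)$ for all $x,y\in A$; $\mathrm{RB}_\lambda(A)$ is the set of such operators. The Rota--Baxter $\lambda$-index of $A$ is $\mathrm{rb}_\lambda(A)=\min\{m\in\mathbb{N}\mid \text{for every } R\in\mathrm{RB}_\lambda(A) \text{ there is } k\in\{0,\ldots,m\} \text{ with } R^k(R+\lambda\,\mathrm{id})^{m-k}=0\}$ (and $\infty$ if no such $m$ exists). A field $F$ is totally real if $\nu_1^2+\cdots+\nu_t^2=0$ with $\nu_i\in F$ implies all $\nu_i=0$; it is quadratically closed if every quadratic equation over $F$ has a solution in $F$. *)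

theory Defs
  imports "Jordan_Normal_Form.Matrix" "HOL-Library.Extended_Nat"
begin

text \<open>The algebra I_n on F^n, basis e_1..e_n encoded as indices 0..n-1 (e_n is index n-1).
  e_n e_n = 2 e_n, e_n e_j = e_j, e_j e_j = e_n (j<n), other products of basis elements 0.\<close>
definition I_mult :: "nat \<Rightarrow> 'a::field vec \<Rightarrow> 'a vec \<Rightarrow> 'a vec" where
  "I_mult n x y = vec n (\<lambda>i. if i = n - 1
      then 2 * x $ (n - 1) * y $ (n - 1) + (\<Sum>j<n - 1. x $ j * y $ j)
      else x $ (n - 1) * y $ i)"

definition is_RB :: "nat \<Rightarrow> 'a::field \<Rightarrow> 'a mat \<Rightarrow> bool" where
  "is_RB n lam R \<longleftrightarrow> R \<in> carrier_mat n n \<and>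
     (\<forall>x\<in>carrier_vec n. \<forall>y\<in>carrier_vec n.
        I_mult n (R *\<^sub>v x) (R *\<^sub>v y) =
        R *\<^sub>v (I_mult n (R *\<^sub>v x) y + I_mult n x (R *\<^sub>v y) + lam \<cdot>\<^sub>v I_mult n x y))"

definition rb_prop :: "nat \<Rightarrow> 'a::field \<Rightarrow> nat \<Rightarrow> bool" where
  "rb_prop n lam m \<longleftrightarrow> (\<forall>R. is_RB n lam R \<longrightarrow>
     (\<exists>k\<le>m. R ^\<^sub>m k * (R + lam \<cdot>\<^sub>m 1\<^sub>m n) ^\<^sub>m (m - k) = 0\<^sub>m n n))"

definition rb_index :: "nat \<Rightarrow> 'a::field \<Rightarrow> enat" where
  "rb_index n lam = (if \<exists>m. rb_prop n lam m then enat (LEAST m. rb_prop n lam m) else \<infinity>)"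

definition totally_real :: "'a::field itself \<Rightarrow> bool" where
  "totally_real _ \<longleftrightarrow> (\<forall>\<nu>::'a list. (\<Sum>v\<leftarrow>\<nu>. v ^ 2) = 0 \<longrightarrow> (\<forall>v\<in>set \<nu>. v = 0))"

definition quadratically_closed :: "'a::field itself \<Rightarrow> bool" where
  "quadratically_closed _ \<longleftrightarrow> (\<forall>a b c::'a. a \<noteq> 0 \<longrightarrow> (\<exists>x. a * x ^ 2 + b * x + c = 0))"

end

theory Submission
  imports Defs
begin

(* Write u = e_n, f x = x_n and <x, y> for the standard dot product; then the product of I_n is
   x y = f x * y + <x, y> * u.  Cancelling the common term f (R x) * R y, the Rota-Baxter identity
   for R becomes
     <R x, R y> * u = c x y * R u + f x * S y,
   with c x y = <R x, y> + <x, R y> + lam <x, y> and S = R (R + lam).  Swapping x and y gives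
   S y = f y * S u, so it suffices to show S u = 0.  If R u = a u, the identity at x = y = u gives
   2 a (a + lam) = 0, and S u = a (a + lam) u.  Otherwise u and R u are linearly independent, so
   <R x, R y> and c x y are multiples of f x * f y; then <x, S y> is computed from c x (R y),
   which makes S u a multiple of u, and comparing with the identity at u, u (where R u occurs)
   forces it to vanish when 2 ~= 0.  Hence R (R + lam) = 0 for every Rota-Baxter operator.
   Over a totally real field <v, v> = 0 forces v = 0, and the identity with S = 0 leaves only
   R = 0 and R = -lam.  Over a quadratically closed field the isotropic vector X = e_1 + i e_2
   gives the rank-one operator x |-> phi x * X, phi x = (1 - lam) x_1 + i x_2, which is a
   Rota-Baxter operator different from 0 and -lam as soon as n >= 3. *)

abbreviation e_last :: "nat \<Rightarrow> 'a::zero_neq_one vec" where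
  "e_last n \<equiv> unit_vec n (n - 1)"

lemma plus_smult_one_mat_vec:
  fixes R :: "'a::field mat"
  assumes R: "R \<in> carrier_mat n n" and y: "y \<in> carrier_vec n"
  shows "(R + lam \<cdot>\<^sub>m 1\<^sub>m n) *\<^sub>v y = R *\<^sub>v y + lam \<cdot>\<^sub>v y"
proof -
  have "(lam \<cdot>\<^sub>m 1\<^sub>m n) *\<^sub>v y = lam \<cdot>\<^sub>v y"
    using y by (intro eq_vecI) simp_all
  then show ?thesis using R y by (simp add: add_mult_distrib_mat_vec[of R n n])
qed

lemma mult_plus_smult_one_mat_vec_carrier [simp]:
  "R \<in> carrier_mat n n \<Longrightarrow> y \<in> carrier_vec n \<Longrightarrow> R * (R + lam \<cdot>\<^sub>m 1\<^sub>m n) *\<^sub>v y \<in> carrier_vec n"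
  by (metis add_carrier_mat mult_carrier_mat mult_mat_vec_carrier one_carrier_mat smult_carrier_mat)

lemma mult_plus_smult_one_mat_vec:
  fixes R :: "'a::field mat"
  assumes R: "R \<in> carrier_mat n n" and y: "y \<in> carrier_vec n"
  shows "R * (R + lam \<cdot>\<^sub>m 1\<^sub>m n) *\<^sub>v y = R *\<^sub>v (R *\<^sub>v y) + lam \<cdot>\<^sub>v (R *\<^sub>v y)"
proof -
  have "R * (R + lam \<cdot>\<^sub>m 1\<^sub>m n) *\<^sub>v y = R *\<^sub>v ((R + lam \<cdot>\<^sub>m 1\<^sub>m n) *\<^sub>v y)"
    using R y by (intro assoc_mult_mat_vec) auto
  then show ?thesis
    using R y by (simp add: plus_smult_one_mat_vec mult_add_distrib_mat_vec[of R n n] mult_mat_vec)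
qed

lemma mult_plus_smult_one_mat_vec_eigen:
  fixes R :: "'a::field mat"
  assumes R: "R \<in> carrier_mat n n" and v: "v \<in> carrier_vec n" and eigen: "R *\<^sub>v v = a \<cdot>\<^sub>v v"
  shows "R * (R + lam \<cdot>\<^sub>m 1\<^sub>m n) *\<^sub>v v = (a * (a + lam)) \<cdot>\<^sub>v v"
  using R v by (simp add: mult_plus_smult_one_mat_vec eigen mult_mat_vec) (auto simp: vec_eq_iff algebra_simps)

lemma mat_eq_0_if_mult_vec_eq_0:
  fixes A :: "'a::semiring_1 mat"
  assumes A: "A \<in> carrier_mat nr nc" and zero: "\<And>v. v \<in> carrier_vec nc \<Longrightarrow> A *\<^sub>v v = 0\<^sub>v nr"
  shows "A = 0\<^sub>m nr nc"
proof (rule eq_matI)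
  fix i j assume "i < dim_row (0\<^sub>m nr nc :: 'a mat)" "j < dim_col (0\<^sub>m nr nc :: 'a mat)"
  then have ij: "i < nr" "j < nc" by auto
  have "A $$ (i, j) = (A *\<^sub>v unit_vec nc j) $ i" using A ij by simp
  then show "A $$ (i, j) = 0\<^sub>m nr nc $$ (i, j)" using zero[of "unit_vec nc j"] ij by simp
qed (use A in auto)

lemma zero_smult_vec:
  "v \<in> carrier_vec n \<Longrightarrow> (0::'a::semiring_0) \<cdot>\<^sub>v v = 0\<^sub>v n"
  by (intro eq_vecI) simp_all

lemma zero_mat_mult_vec:
  "v \<in> carrier_vec nc \<Longrightarrow> 0\<^sub>m nr nc *\<^sub>v v = (0\<^sub>v nr :: 'a::semiring_0 vec)"
  by (intro eq_vecI) simp_all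

lemma vec_add_left_cancel:
  fixes a b c :: "'a::cancel_semigroup_add vec"
  assumes "a \<in> carrier_vec n" "b \<in> carrier_vec n" "c \<in> carrier_vec n"
  shows "a + b = a + c \<longleftrightarrow> b = c"
proof
  assume sum_eq: "a + b = a + c"
  have "a $ i + b $ i = a $ i + c $ i" if "i < n" for i
    using arg_cong[OF sum_eq, of "\<lambda>v. v $ i"] that assms by simp
  then show "b = c" using assms by (intro eq_vecI) auto
qed simp

lemma smult_vec_eqI:
  fixes v w :: "'a::field vec"
  assumes "v \<in> carrier_vec n" and "w \<in> carrier_vec n" and "\<And>i. i < n \<Longrightarrow> p * v $ i = q * w $ i"
  shows "p \<cdot>\<^sub>v v = q \<cdot>\<^sub>v w"
  using assms by (intro eq_vecI) auto

lemma e_last_lin_indep: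
  fixes v :: "'a::field vec"
  assumes v: "v \<in> carrier_vec n" and n: "1 \<le> n" and not_multiple: "\<And>b. v \<noteq> b \<cdot>\<^sub>v e_last n"
    and eq: "p \<cdot>\<^sub>v e_last n = q \<cdot>\<^sub>v v"
  shows "p = 0 \<and> q = 0"
proof -
  have comp: "p * e_last n $ i = q * v $ i" if "i < n" for i
    using arg_cong[OF eq, of "\<lambda>w. w $ i"] that v by simp
  have "q = 0"
  proof (rule ccontr)
    assume "q \<noteq> 0"
    have "v = v $ (n - 1) \<cdot>\<^sub>v e_last n"
    proof (rule eq_vecI)
      fix i assume "i < dim_vec (v $ (n - 1) \<cdot>\<^sub>v e_last n :: 'a vec)"
      then have i: "i < n" by simp
      show "v $ i = (v $ (n - 1) \<cdot>\<^sub>v e_last n) $ i"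
      proof (cases "i = n - 1")
        case False
        with comp[OF i] i \<open>q \<noteq> 0\<close> show ?thesis by simp
      qed (use i in simp)
    qed (use v in simp)
    with not_multiple show False by blast
  qed
  with comp[of "n - 1"] n show ?thesis by simp
qed

lemma eq_smult_e_last_if_scalar_prod:
  fixes v :: "'a::field vec"
  assumes v: "v \<in> carrier_vec n" and dual: "\<And>x. x \<in> carrier_vec n \<Longrightarrow> x \<bullet> v = x $ (n - 1) * t"
  shows "v = t \<cdot>\<^sub>v e_last n"
proof (rule eq_vecI)
  fix i assume "i < dim_vec (t \<cdot>\<^sub>v e_last n :: 'a vec)"
  then have i: "i < n" by simp
  show "v $ i = (t \<cdot>\<^sub>v e_last n) $ i"
    using dual[of "unit_vec n i"] v i by auto
qed (use v in simp)

lemma totally_real_scalar_prod_self_eq_0: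
  fixes v :: "'a::field vec"
  assumes TR: "totally_real TYPE('a)" and v: "v \<in> carrier_vec n" and self: "v \<bullet> v = 0"
  shows "v = 0\<^sub>v n"
proof -
  have "(\<Sum>x\<leftarrow>list_of_vec v. x ^ 2) = v \<bullet> v"
    using v by (simp add: list_of_vec_map scalar_prod_def power2_eq_square
        interv_sum_list_conv_sum_set_nat o_def)
  with TR self have "\<forall>x\<in>set (list_of_vec v). x = 0"
    unfolding totally_real_def by metis
  then show ?thesis
    using v by (intro eq_vecI) (auto simp: list_of_vec_map)
qed

lemma totally_real_mat_eq_0:
  fixes A :: "'a::field mat"
  assumes TR: "totally_real TYPE('a)" and A: "A \<in> carrier_mat nr nc"
    and self: "\<And>v. v \<in> carrier_vec nc \<Longrightarrow> (A *\<^sub>v v) \<bullet> (A *\<^sub>v v) = 0"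
  shows "A = 0\<^sub>m nr nc"
  by (intro mat_eq_0_if_mult_vec_eq_0[OF A] totally_real_scalar_prod_self_eq_0[OF TR] self)
    (use A in auto)

lemma I_mult_eq:
  fixes x y :: "'a::field vec"
  assumes x: "x \<in> carrier_vec n" and y: "y \<in> carrier_vec n"
  shows "I_mult n x y = x $ (n - 1) \<cdot>\<^sub>v y + (x \<bullet> y) \<cdot>\<^sub>v e_last n"
proof (rule eq_vecI)
  fix i assume "i < dim_vec (x $ (n - 1) \<cdot>\<^sub>v y + (x \<bullet> y) \<cdot>\<^sub>v e_last n)"
  then have i: "i < n" by simp
  then obtain m where m: "n = Suc m" by (cases n) auto
  have "x \<bullet> y = (\<Sum>j<n - 1. x $ j * y $ j) + x $ (n - 1) * y $ (n - 1)"
    using y by (simp add: scalar_prod_def m lessThan_atLeast0[symmetric])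
  with i show "I_mult n x y $ i = (x $ (n - 1) \<cdot>\<^sub>v y + (x \<bullet> y) \<cdot>\<^sub>v e_last n) $ i"
    using y by (simp add: I_mult_def)
qed (use y in \<open>simp add: I_mult_def\<close>)

lemma is_RB_iff:
  "is_RB n lam R \<longleftrightarrow> R \<in> carrier_mat n n \<and> (\<forall>x\<in>carrier_vec n. \<forall>y\<in>carrier_vec n.
     ((R *\<^sub>v x) \<bullet> (R *\<^sub>v y)) \<cdot>\<^sub>v e_last n =
     ((R *\<^sub>v x) \<bullet> y + x \<bullet> (R *\<^sub>v y) + lam * (x \<bullet> y)) \<cdot>\<^sub>v (R *\<^sub>v e_last n)
     + x $ (n - 1) \<cdot>\<^sub>v (R * (R + lam \<cdot>\<^sub>m 1\<^sub>m n) *\<^sub>v y))"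
proof (cases "R \<in> carrier_mat n n")
  case R: True
  have "I_mult n (R *\<^sub>v x) (R *\<^sub>v y) =
        R *\<^sub>v (I_mult n (R *\<^sub>v x) y + I_mult n x (R *\<^sub>v y) + lam \<cdot>\<^sub>v I_mult n x y)
    \<longleftrightarrow> ((R *\<^sub>v x) \<bullet> (R *\<^sub>v y)) \<cdot>\<^sub>v e_last n =
     ((R *\<^sub>v x) \<bullet> y + x \<bullet> (R *\<^sub>v y) + lam * (x \<bullet> y)) \<cdot>\<^sub>v (R *\<^sub>v e_last n)
     + x $ (n - 1) \<cdot>\<^sub>v (R * (R + lam \<cdot>\<^sub>m 1\<^sub>m n) *\<^sub>v y)"
    if x: "x \<in> carrier_vec n" and y: "y \<in> carrier_vec n" for x y
  proof -
    let ?p = "(R *\<^sub>v x) $ (n - 1) \<cdot>\<^sub>v (R *\<^sub>v y)"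
    have lhs: "I_mult n (R *\<^sub>v x) (R *\<^sub>v y) = ?p + ((R *\<^sub>v x) \<bullet> (R *\<^sub>v y)) \<cdot>\<^sub>v e_last n"
      using R x y by (simp add: I_mult_eq)
    have rhs: "R *\<^sub>v (I_mult n (R *\<^sub>v x) y + I_mult n x (R *\<^sub>v y) + lam \<cdot>\<^sub>v I_mult n x y) = ?p +
      (((R *\<^sub>v x) \<bullet> y + x \<bullet> (R *\<^sub>v y) + lam * (x \<bullet> y)) \<cdot>\<^sub>v (R *\<^sub>v e_last n)
       + x $ (n - 1) \<cdot>\<^sub>v (R * (R + lam \<cdot>\<^sub>m 1\<^sub>m n) *\<^sub>v y))"
      using R x y
      by (simp add: I_mult_eq mult_plus_smult_one_mat_vec mult_add_distrib_mat_vec mult_mat_vec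
          smult_add_distrib_vec)
        (auto simp: vec_eq_iff algebra_simps)
    show ?thesis
      unfolding lhs rhs using R x y by (intro vec_add_left_cancel[of _ n]) auto
  qed
  with R show ?thesis unfolding is_RB_def by simp
qed (simp add: is_RB_def)

lemma RB_carrier: "is_RB n lam R \<Longrightarrow> R \<in> carrier_mat n n"
  by (simp add: is_RB_def)

lemma RB_identity:
  assumes "is_RB n lam R" and "x \<in> carrier_vec n" and "y \<in> carrier_vec n"
  shows "((R *\<^sub>v x) \<bullet> (R *\<^sub>v y)) \<cdot>\<^sub>v e_last n =
     ((R *\<^sub>v x) \<bullet> y + x \<bullet> (R *\<^sub>v y) + lam * (x \<bullet> y)) \<cdot>\<^sub>v (R *\<^sub>v e_last n)
     + x $ (n - 1) \<cdot>\<^sub>v (R * (R + lam \<cdot>\<^sub>m 1\<^sub>m n) *\<^sub>v y)"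
  using assms unfolding is_RB_iff by blast

lemma RB_mult_plus_lam_rank_one:
  fixes R :: "'a::field mat"
  assumes RB: "is_RB n lam R" and n: "1 \<le> n" and y: "y \<in> carrier_vec n"
  shows "R * (R + lam \<cdot>\<^sub>m 1\<^sub>m n) *\<^sub>v y = y $ (n - 1) \<cdot>\<^sub>v (R * (R + lam \<cdot>\<^sub>m 1\<^sub>m n) *\<^sub>v e_last n)"
proof -
  let ?u = "e_last n :: 'a vec" and ?S = "R * (R + lam \<cdot>\<^sub>m 1\<^sub>m n)"
  have R: "R \<in> carrier_mat n n" using RB by (rule RB_carrier)
  define c where "c = (R *\<^sub>v ?u) \<bullet> y + ?u \<bullet> (R *\<^sub>v y) + lam * (?u \<bullet> y)"
  have "(R *\<^sub>v ?u) \<bullet> (R *\<^sub>v y) = (R *\<^sub>v y) \<bullet> (R *\<^sub>v ?u)"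
    and "c = (R *\<^sub>v y) \<bullet> ?u + y \<bullet> (R *\<^sub>v ?u) + lam * (y \<bullet> ?u)"
    using R y unfolding c_def by (simp_all add: comm_scalar_prod[of _ n])
  then have "c \<cdot>\<^sub>v (R *\<^sub>v ?u) + ?S *\<^sub>v y = c \<cdot>\<^sub>v (R *\<^sub>v ?u) + y $ (n - 1) \<cdot>\<^sub>v (?S *\<^sub>v ?u)"
    using RB_identity[OF RB, of ?u y] RB_identity[OF RB, of y ?u] n y unfolding c_def by simp
  then show ?thesis using R y by (subst (asm) vec_add_left_cancel[of _ n]) auto
qed

lemma RB_at_e_last:
  fixes R :: "'a::field mat"
  assumes RB: "is_RB n lam R" and n: "1 \<le> n"
  shows "((R *\<^sub>v e_last n) \<bullet> (R *\<^sub>v e_last n)) \<cdot>\<^sub>v e_last n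
    = (2 * (R *\<^sub>v e_last n) $ (n - 1) + lam) \<cdot>\<^sub>v (R *\<^sub>v e_last n) + R * (R + lam \<cdot>\<^sub>m 1\<^sub>m n) *\<^sub>v e_last n"
proof -
  let ?u = "e_last n :: 'a vec"
  have R: "R \<in> carrier_mat n n" using RB by (rule RB_carrier)
  have last: "n - 1 < n" using n by simp
  have "(R *\<^sub>v ?u) \<bullet> ?u + ?u \<bullet> (R *\<^sub>v ?u) + lam * (?u \<bullet> ?u) = 2 * (R *\<^sub>v ?u) $ (n - 1) + lam"
    using scalar_prod_left_unit[OF mult_mat_vec_carrier[OF R unit_vec_carrier] last]
      scalar_prod_right_unit[OF last, of "R *\<^sub>v ?u"] scalar_prod_right_unit[OF last, of ?u] last
    by simp
  moreover have "?u $ (n - 1) = 1" using last by simp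
  ultimately show ?thesis using RB_identity[OF RB unit_vec_carrier unit_vec_carrier, of "n - 1" "n - 1"]
    by (simp only: one_smult_vec)
qed

lemma RB_scalar_prods_if_not_eigen:
  fixes R :: "'a::field mat"
  assumes RB: "is_RB n lam R" and n: "1 \<le> n" and not_eigen: "\<And>b. R *\<^sub>v e_last n \<noteq> b \<cdot>\<^sub>v e_last n"
    and x: "x \<in> carrier_vec n" and y: "y \<in> carrier_vec n"
  shows "(R *\<^sub>v x) \<bullet> (R *\<^sub>v y) = x $ (n - 1) * y $ (n - 1) * ((R *\<^sub>v e_last n) \<bullet> (R *\<^sub>v e_last n))"
    and "(R *\<^sub>v x) \<bullet> y + x \<bullet> (R *\<^sub>v y) + lam * (x \<bullet> y)
      = x $ (n - 1) * y $ (n - 1) * (2 * (R *\<^sub>v e_last n) $ (n - 1) + lam)"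
proof -
  let ?u = "e_last n :: 'a vec" and ?S = "R * (R + lam \<cdot>\<^sub>m 1\<^sub>m n)"
  have R: "R \<in> carrier_mat n n" using RB by (rule RB_carrier)
  define \<alpha> where "\<alpha> = (R *\<^sub>v ?u) \<bullet> (R *\<^sub>v ?u)"
  define \<gamma> where "\<gamma> = 2 * (R *\<^sub>v ?u) $ (n - 1) + lam"
  define c where "c = (R *\<^sub>v x) \<bullet> y + x \<bullet> (R *\<^sub>v y) + lam * (x \<bullet> y)"
  define fxy where "fxy = x $ (n - 1) * y $ (n - 1)"
  have "((R *\<^sub>v x) \<bullet> (R *\<^sub>v y) - fxy * \<alpha>) \<cdot>\<^sub>v ?u = (c - fxy * \<gamma>) \<cdot>\<^sub>v (R *\<^sub>v ?u)"
  proof (rule smult_vec_eqI[of _ n])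
    fix i assume i: "i < n"
    let ?e = "?u $ i" and ?r = "(R *\<^sub>v ?u) $ i" and ?s = "(?S *\<^sub>v ?u) $ i"
      and ?P = "(R *\<^sub>v x) \<bullet> (R *\<^sub>v y)"
    have at_u: "\<alpha> * ?e = \<gamma> * ?r + ?s"
      using arg_cong[OF RB_at_e_last[OF RB n], of "\<lambda>w. w $ i"] R i unfolding \<alpha>_def \<gamma>_def by simp
    have at_xy: "?P * ?e = c * ?r + fxy * ?s"
      using arg_cong[OF RB_identity[OF RB x y], of "\<lambda>w. w $ i"] RB_mult_plus_lam_rank_one[OF RB n y] R x y i
      unfolding c_def fxy_def by simp
    have "(?P - fxy * \<alpha>) * ?e = ?P * ?e - fxy * (\<alpha> * ?e)"
      by (simp add: algebra_simps)
    also have "\<dots> = (c - fxy * \<gamma>) * ?r"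
      unfolding at_u at_xy by (simp add: algebra_simps)
    finally show "(?P - fxy * \<alpha>) * ?e = (c - fxy * \<gamma>) * ?r" .
  qed (use R in simp_all)
  from e_last_lin_indep[OF _ n not_eigen this] R
  show "(R *\<^sub>v x) \<bullet> (R *\<^sub>v y) = x $ (n - 1) * y $ (n - 1) * ((R *\<^sub>v e_last n) \<bullet> (R *\<^sub>v e_last n))"
    and "(R *\<^sub>v x) \<bullet> y + x \<bullet> (R *\<^sub>v y) + lam * (x \<bullet> y)
      = x $ (n - 1) * y $ (n - 1) * (2 * (R *\<^sub>v e_last n) $ (n - 1) + lam)"
    unfolding \<alpha>_def \<gamma>_def c_def fxy_def by auto
qed

lemma RB_mult_plus_lam_e_last_eq_0_if_eigen:
  fixes R :: "'a::field mat"
  assumes RB: "is_RB n lam R" and n: "1 \<le> n" and two: "(2::'a) \<noteq> 0"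
    and eigen: "R *\<^sub>v e_last n = a \<cdot>\<^sub>v e_last n"
  shows "R * (R + lam \<cdot>\<^sub>m 1\<^sub>m n) *\<^sub>v e_last n = 0\<^sub>v n"
proof -
  have R: "R \<in> carrier_mat n n" using RB by (rule RB_carrier)
  have Su: "R * (R + lam \<cdot>\<^sub>m 1\<^sub>m n) *\<^sub>v e_last n = (a * (a + lam)) \<cdot>\<^sub>v e_last n"
    by (rule mult_plus_smult_one_mat_vec_eigen[OF R unit_vec_carrier eigen])
  have "a * a = (2 * a + lam) * a + a * (a + lam)"
    using arg_cong[OF RB_at_e_last[OF RB n, unfolded eigen Su], of "\<lambda>w. w $ (n - 1)"] n by simp
  then have "2 * (a * (a + lam)) = 0" by (simp add: algebra_simps)
  with two have "a * (a + lam) = 0" by simp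
  show ?thesis unfolding Su \<open>a * (a + lam) = 0\<close> by (rule zero_smult_vec) simp
qed

lemma RB_mult_plus_lam_e_last_eq_0_if_not_eigen:
  fixes R :: "'a::field mat"
  assumes RB: "is_RB n lam R" and n: "1 \<le> n" and two: "(2::'a) \<noteq> 0"
    and not_eigen: "\<And>b. R *\<^sub>v e_last n \<noteq> b \<cdot>\<^sub>v e_last n"
  shows "R * (R + lam \<cdot>\<^sub>m 1\<^sub>m n) *\<^sub>v e_last n = 0\<^sub>v n"
proof -
  have R: "R \<in> carrier_mat n n" using RB by (rule RB_carrier)
  let ?u = "e_last n :: 'a vec" and ?S = "R * (R + lam \<cdot>\<^sub>m 1\<^sub>m n)"
  define a where "a = (R *\<^sub>v ?u) $ (n - 1)"
  define \<alpha> where "\<alpha> = (R *\<^sub>v ?u) \<bullet> (R *\<^sub>v ?u)"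
  define \<gamma> where "\<gamma> = 2 * a + lam"
  have at_u: "\<alpha> \<cdot>\<^sub>v ?u = \<gamma> \<cdot>\<^sub>v (R *\<^sub>v ?u) + ?S *\<^sub>v ?u"
    unfolding \<alpha>_def \<gamma>_def a_def using RB n by (rule RB_at_e_last)
  note forms = RB_scalar_prods_if_not_eigen[OF RB n not_eigen]
  have "?S *\<^sub>v y = (\<gamma> * (R *\<^sub>v y) $ (n - 1) - \<alpha> * y $ (n - 1)) \<cdot>\<^sub>v ?u"
    if y: "y \<in> carrier_vec n" for y
  proof (rule eq_smult_e_last_if_scalar_prod)
    show "?S *\<^sub>v y \<in> carrier_vec n" using R y by simp
    fix x :: "'a vec" assume x: "x \<in> carrier_vec n"
    have "x \<bullet> (?S *\<^sub>v y) = x \<bullet> (R *\<^sub>v (R *\<^sub>v y)) + lam * (x \<bullet> (R *\<^sub>v y))"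
      using R x y by (simp add: mult_plus_smult_one_mat_vec scalar_prod_add_distrib[of _ n])
    also have "\<dots> = x $ (n - 1) * (R *\<^sub>v y) $ (n - 1) * \<gamma> - (R *\<^sub>v x) \<bullet> (R *\<^sub>v y)"
      using forms(2)[OF x, of "R *\<^sub>v y"] R y unfolding \<gamma>_def a_def by (simp add: algebra_simps)
    also have "\<dots> = x $ (n - 1) * (\<gamma> * (R *\<^sub>v y) $ (n - 1) - \<alpha> * y $ (n - 1))"
      using forms(1)[OF x y] unfolding \<alpha>_def by (simp add: algebra_simps)
    finally show "x \<bullet> (?S *\<^sub>v y) = x $ (n - 1) * (\<gamma> * (R *\<^sub>v y) $ (n - 1) - \<alpha> * y $ (n - 1))" .
  qed
  then have Su: "?S *\<^sub>v ?u = (\<gamma> * a - \<alpha>) \<cdot>\<^sub>v ?u"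
    using n by (simp add: a_def)
  have "(2 * \<alpha> - \<gamma> * a) \<cdot>\<^sub>v ?u = \<gamma> \<cdot>\<^sub>v (R *\<^sub>v ?u)"
  proof (rule smult_vec_eqI[of _ n])
    fix i assume i: "i < n"
    have "\<alpha> * ?u $ i = \<gamma> * (R *\<^sub>v ?u) $ i + (\<gamma> * a - \<alpha>) * ?u $ i"
      using arg_cong[OF at_u[unfolded Su], of "\<lambda>w. w $ i"] R i by simp
    then show "(2 * \<alpha> - \<gamma> * a) * ?u $ i = \<gamma> * (R *\<^sub>v ?u) $ i"
      by (simp add: algebra_simps)
  qed (use R in simp_all)
  from e_last_lin_indep[OF _ n not_eigen this] R have "\<gamma> = 0" "2 * \<alpha> = 0" by auto
  with two have "\<gamma> * a - \<alpha> = 0" by simp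
  show ?thesis unfolding Su \<open>\<gamma> * a - \<alpha> = 0\<close> by (rule zero_smult_vec) simp
qed

lemma RB_mult_plus_lam_eq_0:
  fixes R :: "'a::field mat"
  assumes RB: "is_RB n lam R" and two: "(2::'a) \<noteq> 0"
  shows "R * (R + lam \<cdot>\<^sub>m 1\<^sub>m n) = 0\<^sub>m n n"
proof (cases "n = 0")
  case True
  with RB_carrier[OF RB] show ?thesis by (intro eq_matI) (simp_all add: carrier_matD)
next
  case False
  then have n: "1 \<le> n" by simp
  have R: "R \<in> carrier_mat n n" using RB by (rule RB_carrier)
  have "R * (R + lam \<cdot>\<^sub>m 1\<^sub>m n) *\<^sub>v e_last n = 0\<^sub>v n"
  proof (cases "\<exists>a. R *\<^sub>v e_last n = a \<cdot>\<^sub>v e_last n")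
    case True
    then obtain a where "R *\<^sub>v e_last n = a \<cdot>\<^sub>v e_last n" ..
    then show ?thesis by (rule RB_mult_plus_lam_e_last_eq_0_if_eigen[OF RB n two])
  next
    case False
    then show ?thesis by (intro RB_mult_plus_lam_e_last_eq_0_if_not_eigen[OF RB n two]) blast
  qed
  then have "R * (R + lam \<cdot>\<^sub>m 1\<^sub>m n) *\<^sub>v y = 0\<^sub>v n" if y: "y \<in> carrier_vec n" for y
    unfolding RB_mult_plus_lam_rank_one[OF RB n y] by (intro eq_vecI) simp_all
  then show ?thesis using R by (intro mat_eq_0_if_mult_vec_eq_0[of _ n n]) simp_all
qed

lemma RB_scalar_prod_self:
  fixes R :: "'a::field mat"
  assumes RB: "is_RB n lam R" and two: "(2::'a) \<noteq> 0" and x: "x \<in> carrier_vec n"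
  shows "((R *\<^sub>v x) \<bullet> (R *\<^sub>v x)) \<cdot>\<^sub>v e_last n
    = (2 * ((R *\<^sub>v x) \<bullet> x) + lam * (x \<bullet> x)) \<cdot>\<^sub>v (R *\<^sub>v e_last n)"
  using RB_identity[OF RB x x] RB_carrier[OF RB] x unfolding RB_mult_plus_lam_eq_0[OF RB two]
  by (auto simp: vec_eq_iff comm_scalar_prod[of x n "R *\<^sub>v x"])

lemma RB_e_last_eigen_if_totally_real:
  fixes R :: "'a::field mat"
  assumes RB: "is_RB n lam R" and n: "1 \<le> n" and two: "(2::'a) \<noteq> 0" and TR: "totally_real TYPE('a)"
  obtains a where "R *\<^sub>v e_last n = a \<cdot>\<^sub>v e_last n"
proof (cases "\<exists>a. R *\<^sub>v e_last n = a \<cdot>\<^sub>v e_last n")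
  case False
  then have not_eigen: "R *\<^sub>v e_last n \<noteq> b \<cdot>\<^sub>v e_last n" for b by blast
  have R: "R \<in> carrier_mat n n" using RB by (rule RB_carrier)
  have "R = 0\<^sub>m n n"
  proof (rule totally_real_mat_eq_0[OF TR R])
    fix x :: "'a vec" assume x: "x \<in> carrier_vec n"
    from e_last_lin_indep[OF _ n not_eigen RB_scalar_prod_self[OF RB two x]] R
    show "(R *\<^sub>v x) \<bullet> (R *\<^sub>v x) = 0" by auto
  qed
  with False show ?thesis by (auto simp: vec_eq_iff)
qed (use that in blast)

lemma RB_totally_real_cases:
  fixes R :: "'a::field mat"
  assumes RB: "is_RB n lam R" and two: "(2::'a) \<noteq> 0" and TR: "totally_real TYPE('a)"
  shows "R = 0\<^sub>m n n \<or> R + lam \<cdot>\<^sub>m 1\<^sub>m n = 0\<^sub>m n n"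
proof (cases "n = 0")
  case True
  with RB_carrier[OF RB] show ?thesis by (intro disjI1 eq_matI) (simp_all add: carrier_matD)
next
  case False
  then have n: "1 \<le> n" by simp
  have R: "R \<in> carrier_mat n n" using RB by (rule RB_carrier)
  obtain a where eigen: "R *\<^sub>v e_last n = a \<cdot>\<^sub>v e_last n"
    using RB_e_last_eigen_if_totally_real[OF RB n two TR] .
  have "(a * (a + lam)) \<cdot>\<^sub>v e_last n = 0\<^sub>v n"
    using mult_plus_smult_one_mat_vec_eigen[OF R unit_vec_carrier eigen, of lam]
    unfolding RB_mult_plus_lam_eq_0[OF RB two] by (simp add: zero_mat_mult_vec)
  then have "((a * (a + lam)) \<cdot>\<^sub>v e_last n) $ (n - 1) = 0\<^sub>v n $ (n - 1)" by simp
  then have "a * (a + lam) = 0" using n by simp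
  then consider "a = 0" | "a = - lam" by (auto simp: eq_neg_iff_add_eq_0)
  moreover have quad: "(R *\<^sub>v x) \<bullet> (R *\<^sub>v x) = a * (2 * ((R *\<^sub>v x) \<bullet> x) + lam * (x \<bullet> x))"
    if x: "x \<in> carrier_vec n" for x
    using arg_cong[OF RB_scalar_prod_self[OF RB two x], of "\<lambda>w. w $ (n - 1)"] n unfolding eigen by simp
  ultimately show ?thesis
  proof cases
    case 1
    then have "R = 0\<^sub>m n n" using quad by (intro totally_real_mat_eq_0[OF TR R]) simp
    then show ?thesis ..
  next
    case 2
    have "R + lam \<cdot>\<^sub>m 1\<^sub>m n = 0\<^sub>m n n"
    proof (rule totally_real_mat_eq_0[OF TR])
      show "R + lam \<cdot>\<^sub>m 1\<^sub>m n \<in> carrier_mat n n" using R by simp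
      fix x :: "'a vec" assume x: "x \<in> carrier_vec n"
      have "((R + lam \<cdot>\<^sub>m 1\<^sub>m n) *\<^sub>v x) \<bullet> ((R + lam \<cdot>\<^sub>m 1\<^sub>m n) *\<^sub>v x)
          = (R *\<^sub>v x) \<bullet> (R *\<^sub>v x) + lam * (2 * ((R *\<^sub>v x) \<bullet> x) + lam * (x \<bullet> x))"
        unfolding plus_smult_one_mat_vec[OF R x] using R x
        by (simp add: add_scalar_prod_distrib[of _ n] scalar_prod_add_distrib[of _ n]
            comm_scalar_prod[of x n "R *\<^sub>v x"] algebra_simps)
      also have "\<dots> = 0" using quad[OF x] 2 by simp
      finally show "((R + lam \<cdot>\<^sub>m 1\<^sub>m n) *\<^sub>v x) \<bullet> ((R + lam \<cdot>\<^sub>m 1\<^sub>m n) *\<^sub>v x) = 0" .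
    qed
    then show ?thesis ..
  qed
qed

lemma is_RB_rank_one:
  fixes X \<phi> :: "'a::field vec"
  assumes X: "X \<in> carrier_vec n" and \<phi>: "\<phi> \<in> carrier_vec n" and n: "1 \<le> n"
    and isotropic: "X \<bullet> X = 0" and \<phi>_last: "\<phi> $ (n - 1) = 0" and \<phi>_X: "\<phi> \<bullet> X = - lam"
  shows "is_RB n lam (mat n n (\<lambda>(i, j). X $ i * \<phi> $ j))"
proof -
  let ?R = "mat n n (\<lambda>(i, j). X $ i * \<phi> $ j)"
  have R: "?R \<in> carrier_mat n n" by simp
  have R_vec: "?R *\<^sub>v v = (\<phi> \<bullet> v) \<cdot>\<^sub>v X" if v: "v \<in> carrier_vec n" for v
  proof (rule eq_vecI)
    fix i assume "i < dim_vec ((\<phi> \<bullet> v) \<cdot>\<^sub>v X)"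
    then have i: "i < n" using X by simp
    have "(?R *\<^sub>v v) $ i = (\<Sum>j\<in>{0..<n}. X $ i * \<phi> $ j * v $ j)"
      using i v by (simp add: scalar_prod_def)
    also have "\<dots> = ((\<phi> \<bullet> v) \<cdot>\<^sub>v X) $ i"
      using i v X by (simp add: scalar_prod_def sum_distrib_left algebra_simps)
    finally show "(?R *\<^sub>v v) $ i = ((\<phi> \<bullet> v) \<cdot>\<^sub>v X) $ i" .
  qed (use v X in simp)
  have "?R *\<^sub>v e_last n = 0 \<cdot>\<^sub>v X"
    using R_vec[of "e_last n"] n \<phi>_last by simp
  moreover have "(?R *\<^sub>v x) \<bullet> (?R *\<^sub>v y) = 0" if "x \<in> carrier_vec n" "y \<in> carrier_vec n" for x y
    using that X \<phi> isotropic by (simp add: R_vec)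
  moreover have "?R * (?R + lam \<cdot>\<^sub>m 1\<^sub>m n) *\<^sub>v y = 0 \<cdot>\<^sub>v X" if y: "y \<in> carrier_vec n" for y
    using y X \<phi> \<phi>_X by (simp add: mult_plus_smult_one_mat_vec[OF R y] R_vec)
      (auto simp: vec_eq_iff algebra_simps)
  ultimately show ?thesis
    unfolding is_RB_iff using R X by (auto simp: vec_eq_iff)
qed

lemma is_RB_zero: "is_RB n lam (0\<^sub>m n n :: 'a::field mat)"
  unfolding is_RB_iff by (simp add: zero_mat_mult_vec vec_eq_iff)

lemma rb_index_le: "rb_prop n lam m \<Longrightarrow> rb_index n lam \<le> enat m"
  unfolding rb_index_def by (auto intro: Least_le)

lemma rb_index_eqI:
  assumes "rb_prop n lam m" and "\<And>k. k < m \<Longrightarrow> \<not> rb_prop n lam k"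
  shows "rb_index n lam = enat m"
proof -
  have "(LEAST m. rb_prop n lam m) = m"
    using assms by (intro Least_equality) (auto simp: not_less[symmetric])
  with assms(1) show ?thesis unfolding rb_index_def by auto
qed

lemma not_rb_prop_0: "1 \<le> n \<Longrightarrow> \<not> rb_prop n (lam::'a::field) 0"
proof
  assume n: "1 \<le> n" and "rb_prop n lam 0"
  then have "\<exists>k\<le>0. (0\<^sub>m n n :: 'a mat) ^\<^sub>m k * (0\<^sub>m n n + lam \<cdot>\<^sub>m 1\<^sub>m n) ^\<^sub>m (0 - k) = 0\<^sub>m n n"
    using is_RB_zero unfolding rb_prop_def by blast
  then have "(1\<^sub>m n :: 'a mat) * 1\<^sub>m n = 0\<^sub>m n n" by simp
  then have "(1\<^sub>m n :: 'a mat) $$ (0, 0) = 0\<^sub>m n n $$ (0, 0)" by simp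
  with n show False by simp
qed

lemma rb_prop_1_iff:
  "rb_prop n lam 1 \<longleftrightarrow> (\<forall>R. is_RB n lam R \<longrightarrow> R = 0\<^sub>m n n \<or> R + lam \<cdot>\<^sub>m 1\<^sub>m n = 0\<^sub>m n n)"
proof -
  have "(\<exists>k\<le>1. R ^\<^sub>m k * (R + lam \<cdot>\<^sub>m 1\<^sub>m n) ^\<^sub>m (1 - k) = 0\<^sub>m n n)
      \<longleftrightarrow> R = 0\<^sub>m n n \<or> R + lam \<cdot>\<^sub>m 1\<^sub>m n = 0\<^sub>m n n" if "is_RB n lam R" for R
  proof -
    have "(\<exists>k\<le>1. P k) \<longleftrightarrow> P 0 \<or> P 1" for P :: "nat \<Rightarrow> bool"
      by (auto simp: le_Suc_eq)
    with RB_carrier[OF that] show ?thesis by auto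
  qed
  then show ?thesis unfolding rb_prop_def by blast
qed

lemma rb_prop_2: "(2::'a::field) \<noteq> 0 \<Longrightarrow> rb_prop n (lam::'a) 2"
  unfolding rb_prop_def
proof (intro allI impI)
  fix R assume two: "(2::'a) \<noteq> 0" and RB: "is_RB n lam R"
  have "R ^\<^sub>m 1 * (R + lam \<cdot>\<^sub>m 1\<^sub>m n) ^\<^sub>m (2 - 1) = 0\<^sub>m n n"
    using RB_mult_plus_lam_eq_0[OF RB two] RB_carrier[OF RB] by simp
  then show "\<exists>k\<le>2. R ^\<^sub>m k * (R + lam \<cdot>\<^sub>m 1\<^sub>m n) ^\<^sub>m (2 - k) = 0\<^sub>m n n"
    by (intro exI[of _ 1]) simp
qed

lemma not_rb_prop_1_if_sqrt_minus_one:
  fixes lam i :: "'a::field"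
  assumes i: "i * i = -1" and n: "3 \<le> n"
  shows "\<not> rb_prop n lam 1"
proof -
  define X :: "'a vec" where "X = unit_vec n 0 + i \<cdot>\<^sub>v unit_vec n 1"
  define \<phi> :: "'a vec" where "\<phi> = (1 - lam) \<cdot>\<^sub>v unit_vec n 0 + i \<cdot>\<^sub>v unit_vec n 1"
  let ?R = "mat n n (\<lambda>(j, k). X $ j * \<phi> $ k)"
  have carrier: "X \<in> carrier_vec n" "\<phi> \<in> carrier_vec n" by (simp_all add: X_def \<phi>_def)
  have "X \<bullet> X = 1 + i * i" "\<phi> \<bullet> X = (1 - lam) + i * i"
    using n by (simp_all add: X_def \<phi>_def add_scalar_prod_distrib[of _ n])
  with i have "X \<bullet> X = 0" "\<phi> \<bullet> X = - lam" by simp_all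
  moreover have "\<phi> $ (n - 1) = 0" using n by (simp add: \<phi>_def)
  ultimately have RB: "is_RB n lam ?R"
    using carrier n by (intro is_RB_rank_one) auto
  have "?R $$ (0, 1) = i" "(?R + lam \<cdot>\<^sub>m 1\<^sub>m n) $$ (0, 1) = i"
    using n by (simp_all add: X_def \<phi>_def)
  moreover have "i \<noteq> 0" using i by auto
  moreover have "M $$ (0, 1) = 0" if "M = 0\<^sub>m n n" for M :: "'a mat"
    using that n by simp
  ultimately have "?R \<noteq> 0\<^sub>m n n" "?R + lam \<cdot>\<^sub>m 1\<^sub>m n \<noteq> 0\<^sub>m n n"
    by metis+
  with RB show ?thesis unfolding rb_prop_1_iff by blast
qed

theorem corollary3:
  fixes n :: nat and lam :: "'a::field"
  assumes "(2::'a) \<noteq> 0" and "n \<ge> 1"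
  shows "rb_index n lam \<le> 2
    \<and> (totally_real TYPE('a) \<longrightarrow> rb_index n lam = 1)
    \<and> (quadratically_closed TYPE('a) \<and> n \<ge> 3 \<longrightarrow> rb_index n lam = 2)"
proof (intro conjI impI)
  have rb2: "rb_prop n lam 2" using assms(1) by (rule rb_prop_2)
  have not_rb0: "\<not> rb_prop n lam 0" using assms(2) by (rule not_rb_prop_0)
  show "rb_index n lam \<le> 2"
    using rb_index_le[OF rb2] by (simp add: numeral_eq_enat)
  show "rb_index n lam = 1" if "totally_real TYPE('a)"
  proof -
    have "rb_prop n lam 1"
      unfolding rb_prop_1_iff using RB_totally_real_cases[OF _ assms(1) that] by blast
    with not_rb0 have "rb_index n lam = enat 1" by (intro rb_index_eqI) auto
    then show ?thesis by (simp add: one_enat_def)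
  qed
  show "rb_index n lam = 2" if QC: "quadratically_closed TYPE('a) \<and> n \<ge> 3"
  proof -
    obtain i :: 'a where "i * i = -1"
      using QC[THEN conjunct1, unfolded quadratically_closed_def, rule_format, of 1 0 1]
      by (auto simp: power2_eq_square eq_neg_iff_add_eq_0)
    with QC have "\<not> rb_prop n lam 1" by (intro not_rb_prop_1_if_sqrt_minus_one) auto
    with rb2 not_rb0 have "rb_index n lam = enat 2"
      by (intro rb_index_eqI) (auto simp: less_2_cases_iff)
    then show ?thesis by (simp add: numeral_eq_enat)
  qed
qed

end
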